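(* Let $f(X)=X+\frac{1}{X}$. There are infinitely many pairs of positive rational numbers $(y,z)$ such that $f(4/3)\,f(y)=f(z)$. *)

theory Defs
  imports Complex_Main
begin

definition f :: "rat \<Rightarrow> rat" where
  "f X = X + 1 / X"

end

theory Submission imports Defs begin

text \<open>
  Since f (4/3) = 25/12, writing z = k y turns the equation into
  y^2 k (25 - 12 k) = 12 - 25 k, and with X = 300 k this asks for 625 (144 - X) / (X (625 - X))
  to be a rational square. So every rational point (X, Y) with X > 0 and Y \<noteq> 0 on the
  elliptic curve Y^2 = X (X - 144) (X - 625) yields a solution with z / y = X / 300.
  Repeatedly doubling the point (148225/64, 47222175/512) produces infinitely many such points:
  X has the shape odd / (4^e * odd), and each doubling raises e by one.
\<close>

definition on_curve :: "rat \<Rightarrow> bool" where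
  "on_curve X \<longleftrightarrow> (\<exists>Y. Y^2 = X * (X - 144) * (X - 625))"

text \<open>The X-coordinate of twice the point (X, Y); its denominator 4 X (X - 144) (X - 625) is 4 Y^2.\<close>

definition curve_double :: "rat \<Rightarrow> rat" where
  "curve_double X = (X^2 - 90000)^2 / (4 * X * (X - 144) * (X - 625))"

definition dyadic_form :: "nat \<Rightarrow> rat \<Rightarrow> bool" where
  "dyadic_form e X \<longleftrightarrow> (\<exists>p m :: int. odd p \<and> odd m \<and> X = of_int p / (4^e * of_int m))"

lemma f_four_thirds_eq:
  fixes X y :: rat
  assumes "y > 0" and "y^2 * X * (625 - X) = 625 * (144 - X)"
  shows "f (4/3) * f y = f (X / 300 * y)"
proof -
  have "X \<noteq> 0" using assms(2) by auto
  then show ?thesis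
    using assms unfolding f_def by (simp add: field_simps power2_eq_square) algebra
qed

lemma solution_of_curve_point:
  fixes X :: rat
  assumes "on_curve X" and "X > 0" and "X * (X - 144) * (X - 625) \<noteq> 0"
  shows "\<exists>y > 0. f (4/3) * f y = f (X / 300 * y)"
proof -
  from assms(1) obtain Y where curve: "Y^2 = X * (X - 144) * (X - 625)"
    unfolding on_curve_def by blast
  have "Y \<noteq> 0" "X \<noteq> 625" using assms(3) curve by auto
  define y where "y = 25 * \<bar>Y\<bar> / (X * \<bar>625 - X\<bar>)"
  have "y > 0" using \<open>Y \<noteq> 0\<close> \<open>X > 0\<close> \<open>X \<noteq> 625\<close> y_def by simp
  have "y^2 * (X * (625 - X))^2 = 625 * Y^2"
    using \<open>X > 0\<close> \<open>X \<noteq> 625\<close> unfolding y_def by (simp add: power_divide power_mult_distrib abs_mult)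
  then have "(y^2 * X * (625 - X)) * (X * (625 - X)) = (625 * (144 - X)) * (X * (625 - X))"
    unfolding curve by (simp add: algebra_simps power2_eq_square)
  then have "y^2 * X * (625 - X) = 625 * (144 - X)"
    using \<open>X > 0\<close> \<open>X \<noteq> 625\<close> by simp
  with \<open>y > 0\<close> show ?thesis using f_four_thirds_eq by blast
qed

lemma curve_double_on_curve:
  assumes "on_curve X" and "X * (X - 144) * (X - 625) \<noteq> 0"
  shows "on_curve (curve_double X)"
proof -
  from assms(1) obtain Y where curve: "Y^2 = X * (X - 144) * (X - 625)"
    unfolding on_curve_def by blast
  define N where "N = (X^2 - 90000)^2"
  define D where "D = 4 * Y^2"
  define H where "H = X^4 - 1538*X^3 + 540000*X^2 - 138420000*X + 8100000000"
  have "D \<noteq> 0" using assms(2) curve D_def by simp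
  have double: "curve_double X = N / D"
    unfolding curve_double_def N_def D_def curve by (simp add: mult.assoc)
  have "curve_double X * (curve_double X - 144) * (curve_double X - 625)
      = N * ((N - 144 * D) * (N - 625 * D)) / D^3"
    using \<open>D \<noteq> 0\<close> unfolding double by (simp add: field_simps power3_eq_cube)
  also have "(N - 144 * D) * (N - 625 * D) = H^2"
    unfolding N_def D_def H_def curve by algebra
  also have "N * H^2 / D^3 = ((X^2 - 90000) * H / (8 * Y^3))^2"
    unfolding N_def D_def by (simp add: power_divide power_mult_distrib flip: power_mult)
  finally show ?thesis unfolding on_curve_def by metis
qed

lemma curve_double_nonneg:
  assumes "on_curve X"
  shows "curve_double X \<ge> 0"
proof -
  from assms obtain Y where "Y^2 = X * (X - 144) * (X - 625)"
    unfolding on_curve_def by blast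
  then have "curve_double X = (X^2 - 90000)^2 / (4 * Y^2)"
    unfolding curve_double_def by (simp add: mult.assoc)
  then show ?thesis by simp
qed

lemma curve_double_frac:
  fixes P Q :: rat
  assumes "Q \<noteq> 0"
  shows "curve_double (P / Q) = (P^2 - 90000 * Q^2)^2 / (4 * Q * (P * (P - 144 * Q) * (P - 625 * Q)))"
proof -
  have "(P / Q)^2 - 90000 = (P^2 - 90000 * Q^2) / Q^2"
       "4 * (P / Q) * (P / Q - 144) * (P / Q - 625) = 4 * (P * (P - 144 * Q) * (P - 625 * Q)) / Q^3"
    using assms by (simp_all add: field_simps power2_eq_square power3_eq_cube)
  then show ?thesis
    using assms unfolding curve_double_def by (simp add: power_divide power2_eq_square power3_eq_cube)
qed

lemma dyadic_form_not_int:
  assumes "dyadic_form e X" and "e > 0"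
  shows "X \<noteq> of_int c"
proof
  assume "X = of_int c"
  from assms(1) obtain p m :: int where "odd p" "odd m" and X: "X = of_int p / (4^e * of_int m)"
    unfolding dyadic_form_def by blast
  moreover have "m \<noteq> 0" using \<open>odd m\<close> by auto
  ultimately have "of_int p = (of_int (c * 4^e * m) :: rat)"
    using \<open>X = of_int c\<close> by (simp add: field_simps)
  then have "p = c * 4^e * m" by (simp only: of_int_eq_iff)
  then show False using \<open>odd p\<close> \<open>e > 0\<close> by simp
qed

lemma dyadic_form_unique:
  assumes "dyadic_form e X" and "dyadic_form e' X"
  shows "e = e'"
proof -
  have less: False if "dyadic_form i X" "dyadic_form j X" "i < j" for i j
  proof -
    from that obtain p m p' m' :: int where odd: "odd p" "odd m" "odd p'" "odd m'"
      and X: "X = of_int p / (4^i * of_int m)" "X = of_int p' / (4^j * of_int m')"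
      unfolding dyadic_form_def by blast
    have "m \<noteq> 0" "m' \<noteq> 0" using odd by auto
    with X have "of_int (p * 4^j * m') = (of_int (p' * 4^i * m) :: rat)"
      by (simp add: field_simps)
    then have "p * 4^j * m' = p' * 4^i * m"
      by (simp only: of_int_eq_iff)
    moreover have "(4::int)^j = 4^i * 4^(j - i)"
      using \<open>i < j\<close> by (simp flip: power_add)
    ultimately have "p * 4^(j - i) * m' = p' * m"
      by (simp add: ac_simps)
    moreover have "even ((4::int)^(j - i))" using \<open>i < j\<close> by simp
    ultimately show False using odd by (metis even_mult_iff)
  qed
  show ?thesis using less assms by (metis linorder_neqE_nat)
qed

lemma dyadic_form_curve_double:
  assumes "dyadic_form e X" and "e > 0"
  shows "dyadic_form (Suc e) (curve_double X)"
proof -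
  from assms(1) obtain p m :: int where "odd p" "odd m" and X_pm: "X = of_int p / (4^e * of_int m)"
    unfolding dyadic_form_def by blast
  define q where "q = 4^e * m"
  have "even q" using \<open>e > 0\<close> q_def by simp
  define N where "N = (p^2 - 90000 * q^2)^2"
  define M where "M = m * (p * (p - 144 * q) * (p - 625 * q))"
  have "odd N" "odd M"
    using \<open>odd p\<close> \<open>odd m\<close> \<open>even q\<close> unfolding N_def M_def by auto
  have "q \<noteq> 0" using \<open>odd m\<close> q_def by auto
  have "X = of_int p / of_int q" using X_pm q_def by simp
  then have "curve_double X = of_int N / (4 * of_int q * of_int (p * (p - 144 * q) * (p - 625 * q)))"
    using \<open>q \<noteq> 0\<close> unfolding N_def by (simp add: curve_double_frac)
  also have "\<dots> = of_int N / (4^Suc e * of_int M)"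
    unfolding q_def M_def by (simp add: ac_simps)
  finally show ?thesis
    using \<open>odd N\<close> \<open>odd M\<close> unfolding dyadic_form_def by blast
qed

definition curve_point :: "nat \<Rightarrow> rat" where
  "curve_point n = (curve_double ^^ n) (148225 / 64)"

lemma curve_point_0: "curve_point 0 = 148225 / 64"
  by (simp add: curve_point_def)

lemma curve_point_Suc: "curve_point (Suc n) = curve_double (curve_point n)"
  by (simp add: curve_point_def)

lemma dyadic_form_curve_point: "dyadic_form (n + 3) (curve_point n)"
proof (induction n)
  case 0
  have "curve_point 0 = of_int 148225 / (4^3 * of_int 1)"
    by (simp add: curve_point_0)
  then show ?case
    unfolding dyadic_form_def by (intro exI[of _ 148225] exI[of _ 1]) simp
next
  case (Suc n)
  then show ?case
    using dyadic_form_curve_double[of "n + 3"] by (simp add: curve_point_Suc)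
qed

lemma curve_point_nondegenerate:
  "curve_point n * (curve_point n - 144) * (curve_point n - 625) \<noteq> 0"
proof -
  have "curve_point n \<noteq> of_int c" for c
    using dyadic_form_not_int[OF dyadic_form_curve_point] by simp
  from this[of 0] this[of 144] this[of 625] show ?thesis by simp
qed

lemma curve_point_on_curve: "curve_point n > 0 \<and> on_curve (curve_point n)"
proof (induction n)
  case 0
  have "(47222175 / 512)^2 = (148225 / 64) * (148225 / 64 - 144) * (148225 / 64 - 625 :: rat)"
    by (simp add: power2_eq_square)
  then show ?case unfolding curve_point_0 on_curve_def by (intro conjI exI) simp_all
next
  case (Suc n)
  then have "on_curve (curve_point (Suc n))" "curve_point (Suc n) \<ge> 0"
    unfolding curve_point_Suc
    using curve_double_on_curve curve_double_nonneg curve_point_nondegenerate by blast+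
  moreover have "curve_point (Suc n) \<noteq> 0"
    using curve_point_nondegenerate by auto
  ultimately show ?case by simp
qed

lemma inj_curve_point: "inj curve_point"
  by (rule injI) (metis dyadic_form_curve_point dyadic_form_unique add_right_cancel)

theorem mainTheorem8:
  shows "infinite {(y::rat, z::rat). 0 < y \<and> 0 < z \<and> f (4/3) * f y = f z}"
proof -
  define y where "y n = (SOME y. y > 0 \<and> f (4/3) * f y = f (curve_point n / 300 * y))" for n
  have y: "y n > 0 \<and> f (4/3) * f (y n) = f (curve_point n / 300 * y n)" for n
    unfolding y_def
    using solution_of_curve_point[of "curve_point n"] curve_point_on_curve curve_point_nondegenerate
    by (rule_tac someI_ex) blast
  define sol where "sol n = (y n, curve_point n / 300 * y n)" for n
  have "range sol \<subseteq> {(y, z). 0 < y \<and> 0 < z \<and> f (4/3) * f y = f z}"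
    using y curve_point_on_curve by (auto simp: sol_def)
  moreover have "inj sol"
  proof (rule injI)
    fix i j assume "sol i = sol j"
    then have "curve_point i = curve_point j"
      using y[of j] by (auto simp: sol_def)
    then show "i = j" using inj_curve_point by (simp add: inj_eq)
  qed
  then have "infinite (range sol)" using finite_imageD infinite_UNIV_nat by blast
  ultimately show ?thesis using infinite_super by blast
qed

end
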